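(* Let $0<\alpha<\pi/4$ and $0<\beta\le\pi/4$, and consider the system on $S^2$ described in the context. There is no normal extremal pair $(x,\lambda)$ with $x(0)=N=(0,0,1)$ and a time $t_c>0$ such that the extremal is bang-bang on $[0,t_c]$ and, on an interval $[t_c,t_c+\varepsilon]$ with $\varepsilon>0$, is $u_1$-singular or $u_2$-singular (partially singular).
   Context: The system is $\dot x=Fx+u_1G_1x+u_2G_2x$ on the unit sphere $S^2\subset\mathbb R^3$, measurable controls $|u_i|\le1$, with $F=\cos\alpha\begin{pmatrix}0&-1&0\\1&0&0\\0&0&0\end{pmatrix}$, $G_1=\sin\alpha\sin\beta\begin{pmatrix}0&0&0\\0&0&-1\\0&1&0\end{pmatrix}$, $G_2=\sin\alpha\cos\beta\begin{pmatrix}0&0&-1\\0&0&0\\1&0&0\end{pmatrix}$. An extremal pair: trajectory $x$ with control $u$, Lipschitz row vector $\lambda(t)\in\mathbb R^3$ with $\lambda(t)\cdot x(t)=0$, $\lambda(t)\ne0$, and constant $\lambda_0\le0$, such that a.e. $\dot\lambda=-\lambda(F+u_1G_1+u_2G_2)$, $u(t)$ maximizes $\lambda Fx+u_1\lambda G_1x+u_2\lambda G_2x+\lambda_0$ over $[-1,1]^2$, and the maximum is $0$; normal if $\lambda_0<0$. Switching functions $\phi_i=\lambda G_ix$; $u_i$-singular on an interval means $\phi_i\equiv0$ there. Bang-bang on an interval: finitely many arcs on which $u$ is a.e. constant in $\{-1,1\}^2$. *)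

theory Defs
  imports "HOL-Analysis.Analysis"
begin

definition Fm :: "real \<Rightarrow> real^3^3" where
  "Fm \<alpha> = cos \<alpha> *\<^sub>R vector [vector [0, -1, 0], vector [1, 0, 0], vector [0, 0, 0]]"

definition G1m :: "real \<Rightarrow> real \<Rightarrow> real^3^3" where
  "G1m \<alpha> \<beta> = (sin \<alpha> * sin \<beta>) *\<^sub>R vector [vector [0, 0, 0], vector [0, 0, -1], vector [0, 1, 0]]"

definition G2m :: "real \<Rightarrow> real \<Rightarrow> real^3^3" where
  "G2m \<alpha> \<beta> = (sin \<alpha> * cos \<beta>) *\<^sub>R vector [vector [0, 0, -1], vector [0, 0, 0], vector [1, 0, 0]]"

definition Am :: "real \<Rightarrow> real \<Rightarrow> real \<Rightarrow> real \<Rightarrow> real^3^3" where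
  "Am \<alpha> \<beta> v1 v2 = Fm \<alpha> + v1 *\<^sub>R G1m \<alpha> \<beta> + v2 *\<^sub>R G2m \<alpha> \<beta>"

definition north :: "real^3" where
  "north = vector [0, 0, 1]"

definition ham :: "real \<Rightarrow> real \<Rightarrow> real^3 \<Rightarrow> real^3 \<Rightarrow> real \<Rightarrow> real \<Rightarrow> real \<Rightarrow> real" where
  "ham \<alpha> \<beta> l x l0 v1 v2 = l \<bullet> (Am \<alpha> \<beta> v1 v2 *v x) + l0"

definition extremal ::
  "real \<Rightarrow> real \<Rightarrow> real \<Rightarrow> (real \<Rightarrow> real^3) \<Rightarrow> (real \<Rightarrow> real) \<Rightarrow> (real \<Rightarrow> real)
     \<Rightarrow> (real \<Rightarrow> real^3) \<Rightarrow> real \<Rightarrow> bool" where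
  "extremal \<alpha> \<beta> T x u1 u2 lam l0 \<longleftrightarrow>
     0 < T \<and>
     u1 measurable_on {0..T} \<and> u2 measurable_on {0..T} \<and>
     (\<forall>t\<in>{0..T}. \<bar>u1 t\<bar> \<le> 1 \<and> \<bar>u2 t\<bar> \<le> 1) \<and>
     (\<forall>t\<in>{0..T}. norm (x t) = 1) \<and>
     (\<forall>t\<in>{0..T}. ((\<lambda>s. Am \<alpha> \<beta> (u1 s) (u2 s) *v x s) has_integral (x t - x 0)) {0..t}) \<and>
     (\<exists>L. L-lipschitz_on {0..T} lam) \<and>
     (\<forall>t\<in>{0..T}. lam t \<bullet> x t = 0 \<and> lam t \<noteq> 0) \<and>
     l0 \<le> 0 \<and>
     (AE t in lborel. t \<in> {0..T} \<longrightarrow>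
        (lam has_vector_derivative (- (lam t v* Am \<alpha> \<beta> (u1 t) (u2 t)))) (at t within {0..T})) \<and>
     (AE t in lborel. t \<in> {0..T} \<longrightarrow>
        ham \<alpha> \<beta> (lam t) (x t) l0 (u1 t) (u2 t) = 0 \<and>
        (\<forall>v1 v2. \<bar>v1\<bar> \<le> 1 \<longrightarrow> \<bar>v2\<bar> \<le> 1 \<longrightarrow>
           ham \<alpha> \<beta> (lam t) (x t) l0 v1 v2 \<le> ham \<alpha> \<beta> (lam t) (x t) l0 (u1 t) (u2 t)))"

definition phi1 :: "real \<Rightarrow> real \<Rightarrow> (real \<Rightarrow> real^3) \<Rightarrow> (real \<Rightarrow> real^3) \<Rightarrow> real \<Rightarrow> real" where
  "phi1 \<alpha> \<beta> lam x t = lam t \<bullet> (G1m \<alpha> \<beta> *v x t)"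

definition phi2 :: "real \<Rightarrow> real \<Rightarrow> (real \<Rightarrow> real^3) \<Rightarrow> (real \<Rightarrow> real^3) \<Rightarrow> real \<Rightarrow> real" where
  "phi2 \<alpha> \<beta> lam x t = lam t \<bullet> (G2m \<alpha> \<beta> *v x t)"

definition bang_bang :: "(real \<Rightarrow> real) \<Rightarrow> (real \<Rightarrow> real) \<Rightarrow> real \<Rightarrow> real \<Rightarrow> bool" where
  "bang_bang u1 u2 a b \<longleftrightarrow>
     (\<exists>(n::nat) (s::nat \<Rightarrow> real) (c1::nat \<Rightarrow> real) (c2::nat \<Rightarrow> real).
        s 0 = a \<and> s n = b \<and> (\<forall>k<n. s k < s (Suc k)) \<and>
        (\<forall>k<n. c1 k \<in> {-1, 1} \<and> c2 k \<in> {-1, 1} \<and>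
           (AE t in lborel. t \<in> {s k<..<s (Suc k)} \<longrightarrow> u1 t = c1 k \<and> u2 t = c2 k)))"

end

(*
  Write a = sin alpha sin beta, b = sin alpha cos beta, c = cos alpha. The vector fields rotate the
  sphere: x' = w cross x with angular velocity w = (a u1, -b u2, c), and the costate obeys the same
  equation. With Phi = x cross lambda the switching functions are phi1 = a Phi1, phi2 = -b Phi2, and
  the maximized Hamiltonian a |Phi1| + b |Phi2| + c Phi3 equals h = -lambda0 > 0 along the extremal.
  The norm of lambda, hence of Phi, is constant, and Phi3 = 0 at the north pole; Cauchy-Schwarz and
  alpha < pi/4 then give h < c |Phi|.

  On a u1-singular arc Phi1 = 0, so (|Phi2|, Phi3) lies on a line and on a circle and Phi is a
  constant Q, with b |Q3| < c |Q2| by the bound on h. Differentiating Q . lambda = 0 shows that w is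
  tangent to the sphere at x, whence (w cross Q)_1 = (w . lambda) x1, a quantity of fixed sign
  bounded away from 0 because |u2| <= 1. Integrating Q . x = 0 instead shows that w . lambda has
  zero integral over every subinterval. The two facts clash where the continuous x1 keeps a sign.
  The u2-singular case is the same with the indices 1 and 2 exchanged.
*)
theory Submission
  imports Defs
begin

unbundle cross3_syntax

lemma mult_le_abs_if_abs_le_1:
  fixes v y :: real
  assumes "\<bar>v\<bar> \<le> 1"
  shows "v * y \<le> \<bar>y\<bar>"
proof -
  have "v * y \<le> \<bar>v\<bar> * \<bar>y\<bar>"
    by (metis abs_ge_self abs_mult)
  also have "\<dots> \<le> \<bar>y\<bar>"
    using assms by (simp add: mult_left_le_one_le)
  finally show ?thesis .
qed

lemma ge_if_mult_ge_pos_le_1: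
  fixes \<kappa> w z :: real
  assumes "\<kappa> \<le> w * z" "0 < z" "z \<le> 1" "0 < \<kappa>"
  shows "\<kappa> \<le> w"
proof -
  have "0 < w"
  proof (rule ccontr)
    assume "\<not> 0 < w"
    then have "w * z \<le> 0"
      using assms(2) by (simp add: mult_nonpos_nonneg)
    with assms(1,4) show False
      by linarith
  qed
  then have "w * z \<le> w"
    using assms(3) by (simp add: mult_left_le)
  with assms(1) show ?thesis
    by linarith
qed

lemma finite_quadratic_roots:
  fixes A B C :: real
  assumes "A \<noteq> 0"
  shows "finite {z. A * z\<^sup>2 + B * z + C = 0}"
proof (cases "{z. A * z\<^sup>2 + B * z + C = 0} = {}")
  case False
  then obtain z0 where z0: "A * z0\<^sup>2 + B * z0 + C = 0"
    by auto
  have "{z. A * z\<^sup>2 + B * z + C = 0} \<subseteq> {z0, - B / A - z0}"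
  proof
    fix z
    assume "z \<in> {z. A * z\<^sup>2 + B * z + C = 0}"
    with z0 have "(z - z0) * (A * (z + z0) + B) = 0"
      by (simp add: power2_eq_square algebra_simps)
    then have "z = z0 \<or> A * (z + z0) + B = 0"
      by simp
    then show "z \<in> {z0, - B / A - z0}"
      using assms by (auto simp: field_simps)
  qed
  then show ?thesis
    by (rule finite_subset) simp
qed simp

lemma weighted_abs_sum_sq_le:
  fixes a b y z :: real
  shows "(a * \<bar>y\<bar> + b * \<bar>z\<bar>)\<^sup>2 \<le> (a\<^sup>2 + b\<^sup>2) * (y\<^sup>2 + z\<^sup>2)"
proof -
  have "(a\<^sup>2 + b\<^sup>2) * (y\<^sup>2 + z\<^sup>2) - (a * \<bar>y\<bar> + b * \<bar>z\<bar>)\<^sup>2 = (a * \<bar>z\<bar> - b * \<bar>y\<bar>)\<^sup>2"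
    by (simp add: power2_eq_square algebra_simps abs_mult_self_eq)
  then show ?thesis
    by (metis diff_ge_0_iff_ge zero_le_power2)
qed

text \<open>On a singular arc c z + k |y| = h is the maximized Hamiltonian, and h < c |(y, z)| comes
  from its value at the north pole.\<close>
lemma singular_arc_inequality:
  fixes c k h y z :: real
  assumes "0 \<le> k" "k \<le> c" "0 < h" and ham: "c * z + k * \<bar>y\<bar> = h" and lt: "h\<^sup>2 < c\<^sup>2 * (y\<^sup>2 + z\<^sup>2)"
  shows "k * \<bar>z\<bar> < c * \<bar>y\<bar>"
proof (rule ccontr)
  assume "\<not> ?thesis"
  then have le: "c * \<bar>y\<bar> \<le> k * \<bar>z\<bar>"
    by simp
  show False
  proof (cases "z < 0")
    case True
    have "c * (k * \<bar>y\<bar>) \<le> k * (k * \<bar>z\<bar>)"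
      using mult_left_mono[OF le \<open>0 \<le> k\<close>] by (simp add: algebra_simps)
    also have "\<dots> \<le> c * (c * \<bar>z\<bar>)"
      using assms(1,2) by (simp add: mult_mono mult.assoc[symmetric])
    finally have "k * \<bar>y\<bar> \<le> c * \<bar>z\<bar>"
      using assms(1-3) ham by (cases "c = 0") auto
    with True ham \<open>0 < h\<close> show False
      by simp
  next
    case False
    have "c * \<bar>y\<bar> * (c * \<bar>y\<bar>) \<le> c * \<bar>y\<bar> * (k * z)"
      using le False assms(1,2) by (intro mult_left_mono) auto
    moreover have "0 \<le> c * \<bar>y\<bar> * (k * z)" "0 \<le> (k * \<bar>y\<bar>)\<^sup>2"
      using False assms(1,2) by simp_all
    moreover have "(c * z + k * \<bar>y\<bar>)\<^sup>2 = c\<^sup>2 * z\<^sup>2 + 2 * (c * \<bar>y\<bar> * (k * z)) + (k * \<bar>y\<bar>)\<^sup>2"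
      by (simp add: power2_eq_square algebra_simps)
    moreover have "c\<^sup>2 * (y\<^sup>2 + z\<^sup>2) = c\<^sup>2 * z\<^sup>2 + c * \<bar>y\<bar> * (c * \<bar>y\<bar>)"
      by (simp add: power2_eq_square algebra_simps abs_mult_self_eq)
    ultimately have "c\<^sup>2 * (y\<^sup>2 + z\<^sup>2) \<le> (c * z + k * \<bar>y\<bar>)\<^sup>2"
      by linarith
    with ham lt show False
      by simp
  qed
qed

section \<open>Real analysis on intervals\<close>

lemma AE_lborel_ex_in_Ioo:
  assumes "AE t in lborel. P t" "(c::real) < d"
  shows "\<exists>t\<in>{c<..<d}. P t"
proof (rule ccontr)
  assume "\<not> ?thesis"
  then have "AE t in lborel. t \<notin> {c<..<d}"
    using assms(1) by (auto elim: eventually_mono)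
  then have "{c<..<d} \<in> null_sets lborel"
    by (simp add: AE_iff_null_sets)
  then show False
    using assms(2) by (simp add: null_sets_def emeasure_lborel_Ioo)
qed

lemma AE_lborel_negligibleE:
  assumes "AE t in lborel. P t"
  obtains N :: "real set" where "negligible N" "\<And>t. t \<notin> N \<Longrightarrow> P t"
  using AE_completion[OF assms] that by (auto simp: eventually_ae_filter_negligible)

lemma continuous_on_eq_0_if_AE:
  fixes g :: "real \<Rightarrow> real"
  assumes "a < b" "continuous_on {a..b} g" "AE t in lborel. t \<in> {a..b} \<longrightarrow> g t = 0"
    and "t \<in> {a..b}"
  shows "g t = 0"
proof (rule ccontr)
  assume "g t \<noteq> 0"
  with assms(2,4) obtain d where "d > 0"
    and d: "\<And>s. s \<in> {a..b} \<Longrightarrow> dist s t < d \<Longrightarrow> dist (g s) (g t) < \<bar>g t\<bar>"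
    unfolding continuous_on_iff by (metis zero_less_abs_iff)
  have "max a (t - d) < min b (t + d)"
    using assms(1,4) \<open>d > 0\<close> by auto
  then obtain s where s: "s \<in> {max a (t - d)<..<min b (t + d)}" "s \<in> {a..b} \<longrightarrow> g s = 0"
    using AE_lborel_ex_in_Ioo[OF assms(3)] by blast
  then have "s \<in> {a..b}" "dist s t < d"
    by (auto simp: dist_real_def)
  with d s(2) show False
    by fastforce
qed

lemma has_real_derivative_inner_const:
  assumes "(f has_vector_derivative D) F"
  shows "((\<lambda>s. c \<bullet> f s) has_real_derivative c \<bullet> D) F"
proof -
  have "((\<lambda>s. c \<bullet> f s) has_derivative (\<lambda>h. c \<bullet> (h *\<^sub>R D))) F"
    using assms unfolding has_vector_derivative_def by (rule has_derivative_inner_right)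
  moreover have "(\<lambda>h. c \<bullet> (h *\<^sub>R D)) = (*) (c \<bullet> D)"
    by (rule ext) (simp add: mult.commute)
  ultimately show ?thesis
    by (simp add: has_field_derivative_def)
qed

lemma negligible_image_if_derivative_zero:
  fixes f :: "real \<Rightarrow> real"
  assumes "\<And>t. t \<in> Z \<Longrightarrow> (f has_real_derivative 0) (at t within Z)"
  shows "negligible (f ` Z)"
proof -
  \<comment> \<open>baby_Sard is stated on real^'n, so f is transported to real^1\<close>
  define F :: "real^1 \<Rightarrow> real^1" where "F = (\<lambda>v. vec (f (v $ 1)))"
  define Z' :: "(real^1) set" where "Z' = (\<lambda>v. v $ 1) -` Z"
  have "negligible (F ` Z')"
  proof (rule baby_Sard[where f' = "\<lambda>_ _. 0"])
    fix v
    assume v: "v \<in> Z'"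
    have "((\<lambda>v::real^1. v $ 1) has_derivative (\<lambda>h. h $ 1)) (at v within Z')"
      by (simp add: bounded_linear_imp_has_derivative bounded_linear_vec_nth)
    moreover have "(\<lambda>v::real^1. v $ 1) ` Z' = Z"
      unfolding Z'_def by (auto intro!: image_eqI[where x = "vec _"])
    moreover have "(f has_derivative (\<lambda>h. 0)) (at (v $ 1) within Z)"
      using assms[of "v $ 1"] v by (simp add: Z'_def has_field_derivative_def lambda_zero)
    ultimately have "((\<lambda>v::real^1. f (v $ 1)) has_derivative (\<lambda>h. 0)) (at v within Z')"
      using has_derivative_in_compose[of "\<lambda>v. v $ 1" "\<lambda>h. h $ 1" v Z' f "\<lambda>h. 0"] by simp
    then have "((\<lambda>v. vec (f (v $ 1)) :: real^1) has_derivative (\<lambda>h. vec 0)) (at v within Z')"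
      by (rule bounded_linear.has_derivative[OF linear_conv_bounded_linear[THEN iffD1, OF linear_vec]])
    then show "(F has_derivative (\<lambda>_. 0)) (at v within Z')"
      by (simp add: F_def vec_0)
  next
    fix v :: "real^1"
    have "matrix (\<lambda>_::real^1. 0::real^1) = 0"
      by (simp add: matrix_def vec_eq_iff)
    then show "rank (matrix ((\<lambda>_ (_::real^1). 0::real^1) v)) < CARD(1)"
      by simp
  qed simp
  then have "negligible ((\<lambda>v::real^1. v $ 1) ` F ` Z')"
    by (intro negligible_differentiable_image_negligible[where f = "\<lambda>v. v $ 1"])
      (auto simp: differentiable_on_def intro!: bounded_linear_imp_differentiable)
  moreover have "(\<lambda>v::real^1. v $ 1) ` F ` Z' = f ` Z"
    unfolding F_def Z'_def by (auto simp: image_iff intro!: bexI[where x = "vec _"])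
  ultimately show ?thesis
    by simp
qed

text \<open>The image of [a, b] is an interval, and it is negligible: Lipschitz maps preserve null sets,
  and Sard's lemma handles the points where the derivative vanishes.\<close>
lemma lipschitz_on_eq_if_AE_derivative_zero:
  fixes f :: "real \<Rightarrow> real"
  assumes "a \<le> b" and lip: "L-lipschitz_on {a..b} f"
    and der: "AE t in lborel. t \<in> {a..b} \<longrightarrow> (f has_real_derivative 0) (at t within {a..b})"
  shows "f b = f a"
proof -
  obtain N where N: "negligible N"
    and N': "\<And>t. t \<notin> N \<Longrightarrow> t \<in> {a..b} \<longrightarrow> (f has_real_derivative 0) (at t within {a..b})"
    using AE_lborel_negligibleE[OF der] by blast
  have "negligible (f ` ({a..b} \<inter> N))"
  proof (rule negligible_locally_Lipschitz_image)
    fix t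
    assume "t \<in> {a..b} \<inter> N"
    then show "\<exists>U B. open U \<and> t \<in> U \<and> (\<forall>s\<in>{a..b} \<inter> N \<inter> U. norm (f s - f t) \<le> B * norm (s - t))"
      using lipschitz_onD[OF lip] by (intro exI[of _ UNIV] exI[of _ L]) (auto simp: dist_norm)
  qed (use N in \<open>auto simp: negligible_Int\<close>)
  moreover have "negligible (f ` ({a..b} - N))"
    using N' by (intro negligible_image_if_derivative_zero) (auto intro: DERIV_subset)
  moreover have "f ` {a..b} = f ` ({a..b} \<inter> N) \<union> f ` ({a..b} - N)"
    by auto
  ultimately have neg: "negligible (f ` {a..b})"
    by simp
  have conn: "connected (f ` {a..b})"
    by (intro connected_continuous_image lipschitz_on_continuous_on[OF lip]) simp
  have "\<not> f a < f b" "\<not> f b < f a"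
    using negligible_subset[OF neg connected_contains_Icc[OF conn, of "f a" "f b"]]
      negligible_subset[OF neg connected_contains_Icc[OF conn, of "f b" "f a"]] \<open>a \<le> b\<close>
    by (auto simp: negligible_interval(1)[of "f a" "f b", unfolded cbox_interval box_real]
        negligible_interval(1)[of "f b" "f a", unfolded cbox_interval box_real])
  then show ?thesis
    by simp
qed

lemma has_real_derivative_inner_self:
  assumes "(f has_vector_derivative D) (at t within S)"
  shows "((\<lambda>s. f s \<bullet> f s) has_real_derivative 2 * (f t \<bullet> D)) (at t within S)"
proof -
  have "((\<lambda>s. f s \<bullet> f s) has_derivative (\<lambda>h. f t \<bullet> (h *\<^sub>R D) + (h *\<^sub>R D) \<bullet> f t)) (at t within S)"
    using assms unfolding has_vector_derivative_def by (intro has_derivative_inner)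
  moreover have "(\<lambda>h. f t \<bullet> (h *\<^sub>R D) + (h *\<^sub>R D) \<bullet> f t) = (*) (2 * (f t \<bullet> D))"
    by (rule ext) (simp add: inner_commute algebra_simps)
  ultimately show ?thesis
    by (simp add: has_field_derivative_def)
qed

lemma lipschitz_on_inner_self:
  assumes lip: "L-lipschitz_on S f" and bound: "\<And>s. s \<in> S \<Longrightarrow> norm (f s) \<le> K" and "0 \<le> K"
  shows "(2 * K * L)-lipschitz_on S (\<lambda>s. f s \<bullet> f s)"
proof (rule lipschitz_onI)
  fix y z
  assume yz: "y \<in> S" "z \<in> S"
  have "f y \<bullet> f y - f z \<bullet> f z = (f y - f z) \<bullet> (f y + f z)"
    by (simp add: inner_diff_left inner_diff_right inner_add_right inner_commute)
  then have "dist (f y \<bullet> f y) (f z \<bullet> f z) = \<bar>(f y - f z) \<bullet> (f y + f z)\<bar>"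
    by (simp add: dist_real_def)
  also have "\<dots> \<le> norm (f y - f z) * norm (f y + f z)"
    by (rule Cauchy_Schwarz_ineq2)
  also have "\<dots> \<le> (L * dist y z) * (2 * K)"
  proof (rule mult_mono)
    show "norm (f y - f z) \<le> L * dist y z"
      using lipschitz_onD[OF lip yz] by (simp add: dist_norm)
    show "norm (f y + f z) \<le> 2 * K"
      using norm_triangle_ineq[of "f y" "f z"] bound[OF yz(1)] bound[OF yz(2)] by simp
  qed (use lipschitz_on_nonneg[OF lip] in auto)
  finally show "dist (f y \<bullet> f y) (f z \<bullet> f z) \<le> 2 * K * L * dist y z"
    by (simp add: algebra_simps)
next
  show "0 \<le> 2 * K * L"
    using \<open>0 \<le> K\<close> lipschitz_on_nonneg[OF lip] by simp
qed

lemma norm_eq_if_AE_derivative_orthogonal: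
  fixes f :: "real \<Rightarrow> 'a::real_inner"
  assumes lip: "L-lipschitz_on {a..b} f"
    and der: "AE t in lborel. t \<in> {a..b} \<longrightarrow>
                (f has_vector_derivative D t) (at t within {a..b}) \<and> f t \<bullet> D t = 0"
    and t: "t \<in> {a..b}"
  shows "norm (f t) = norm (f a)"
proof -
  define K where "K = norm (f a) + L * (b - a)"
  have bound: "norm (f s) \<le> K" if "s \<in> {a..t}" for s
  proof -
    have "norm (f s - f a) \<le> L * (s - a)"
      using lipschitz_onD[OF lip, of s a] that t by (auto simp: dist_norm dist_real_def)
    also have "\<dots> \<le> L * (b - a)"
      using that t lipschitz_on_nonneg[OF lip] by (auto intro: mult_left_mono)
    finally show ?thesis
      unfolding K_def using norm_triangle_sub[of "f s" "f a"] by linarith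
  qed
  have "0 \<le> K"
    using order_trans[OF norm_ge_zero bound[of a]] t by simp
  have "(2 * K * L)-lipschitz_on {a..t} (\<lambda>s. f s \<bullet> f s)"
    using lipschitz_on_subset[OF lip] t bound \<open>0 \<le> K\<close> by (intro lipschitz_on_inner_self) auto
  moreover have "AE s in lborel. s \<in> {a..t} \<longrightarrow> ((\<lambda>s. f s \<bullet> f s) has_real_derivative 0) (at s within {a..t})"
    using der
  proof (rule eventually_mono, intro impI)
    fix s
    assume "s \<in> {a..t}"
      and "s \<in> {a..b} \<longrightarrow> (f has_vector_derivative D s) (at s within {a..b}) \<and> f s \<bullet> D s = 0"
    then have "(f has_vector_derivative D s) (at s within {a..t})" "f s \<bullet> D s = 0"
      using t by (auto intro: has_vector_derivative_within_subset)
    then show "((\<lambda>s. f s \<bullet> f s) has_real_derivative 0) (at s within {a..t})"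
      using has_real_derivative_inner_self by fastforce
  qed
  ultimately have "f t \<bullet> f t = f a \<bullet> f a"
    using t by (intro lipschitz_on_eq_if_AE_derivative_zero) auto
  then show ?thesis
    by (simp add: norm_eq_sqrt_inner)
qed

lemma has_integral_increment:
  fixes f :: "real \<Rightarrow> 'a::banach"
  assumes y: "\<And>t. t \<in> {a..b} \<Longrightarrow> (f has_integral (y t - y a)) {a..t}"
    and "a \<le> s" "s \<le> t" "t \<le> b"
  shows "(f has_integral (y t - y s)) {s..t}"
proof -
  have s: "(f has_integral (y s - y a)) {a..s}" and t: "(f has_integral (y t - y a)) {a..t}"
    using y assms(2-4) by auto
  have "f integrable_on {s..t}"
    using integrable_subinterval_real[OF has_integral_integrable[OF t]] assms(2) by simp
  then obtain I where I: "(f has_integral I) {s..t}"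
    by blast
  have "(f has_integral (y s - y a) + I) {a..t}"
    using has_integral_combine[OF assms(2,3) s I] .
  then have "y t - y a = (y s - y a) + I"
    using t by (rule has_integral_unique[rotated])
  with I show ?thesis
    by (simp add: algebra_simps)
qed

lemma has_integral_ge_if_AE_ge:
  fixes g :: "real \<Rightarrow> real"
  assumes "(g has_integral I) {s..t}" "s \<le> t" "AE r in lborel. r \<in> {s..t} \<longrightarrow> k \<le> g r"
  shows "k * (t - s) \<le> I"
proof -
  obtain N where N: "negligible N" "\<And>r. r \<notin> N \<Longrightarrow> r \<in> {s..t} \<longrightarrow> k \<le> g r"
    using AE_lborel_negligibleE[OF assms(3)] by blast
  define g' where "g' r = (if r \<in> N then k else g r)" for r
  have "((\<lambda>r. k) has_integral k * (t - s)) {s..t}"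
    using has_integral_const_real[of k s t] assms(2) by (simp add: mult.commute)
  moreover have "(g' has_integral I) {s..t}"
    by (rule has_integral_spike[OF N(1) _ assms(1)]) (simp add: g'_def)
  moreover have "k \<le> g' r" if "r \<in> {s..t}" for r
    using N(2)[of r] that by (simp add: g'_def)
  ultimately show ?thesis
    by (rule has_integral_le)
qed

lemma continuous_on_sgn_mult_pos_right:
  fixes y :: "real \<Rightarrow> real"
  assumes "continuous_on {s0..s1} y" "t0 \<in> {s0<..<s1}" "y t0 \<noteq> 0"
  obtains \<delta> where "0 < \<delta>" "{t0..t0 + \<delta>} \<subseteq> {s0<..<s1}"
    "\<And>r. r \<in> {t0..t0 + \<delta>} \<Longrightarrow> 0 < sgn (y t0) * y r"
proof -
  have "0 < \<bar>y t0\<bar>" "t0 \<in> {s0..s1}"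
    using assms(2,3) by auto
  then obtain d where "0 < d"
    and d: "\<forall>r\<in>{s0..s1}. dist r t0 < d \<longrightarrow> dist (y r) (y t0) < \<bar>y t0\<bar>"
    using assms(1) unfolding continuous_on_iff by blast
  define \<delta> where "\<delta> = min (d / 2) ((s1 - t0) / 2)"
  have "0 < \<delta>" "\<delta> \<le> d / 2" "\<delta> \<le> (s1 - t0) / 2"
    using \<open>0 < d\<close> assms(2) by (auto simp: \<delta>_def min_def)
  moreover have sub: "{t0..t0 + \<delta>} \<subseteq> {s0<..<s1}"
    using assms(2) \<open>\<delta> \<le> (s1 - t0) / 2\<close> by auto
  moreover have "0 < sgn (y t0) * y r" if r: "r \<in> {t0..t0 + \<delta>}" for r
  proof -
    have "r \<in> {s0..s1}" "dist r t0 < d"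
      using r sub \<open>\<delta> \<le> d / 2\<close> \<open>0 < d\<close> by (auto simp: dist_real_def)
    then have "\<bar>y r - y t0\<bar> < \<bar>y t0\<bar>"
      using d by (simp add: dist_real_def)
    then show ?thesis
      by (cases "0 < y t0") (simp_all add: abs_less_iff)
  qed
  ultimately show ?thesis
    using that by blast
qed

text \<open>Where the continuous factor y has a fixed sign \<sigma>, the bound forces \<sigma> g \<ge> \<kappa> a.e.,
  so g cannot integrate to 0 there.\<close>
lemma not_AE_mult_ge_if_integrals_vanish:
  fixes g y :: "real \<Rightarrow> real"
  assumes "s0 < s1" "0 < \<kappa>" and y: "continuous_on {s0..s1} y" "\<And>r. r \<in> {s0..s1} \<Longrightarrow> \<bar>y r\<bar> \<le> 1"
    and g: "\<And>s t. s0 \<le> s \<Longrightarrow> s \<le> t \<Longrightarrow> t \<le> s1 \<Longrightarrow> (g has_integral 0) {s..t}"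
  shows "\<not> (AE r in lborel. r \<in> {s0<..<s1} \<longrightarrow> \<kappa> \<le> g r * y r)"
proof
  assume ae: "AE r in lborel. r \<in> {s0<..<s1} \<longrightarrow> \<kappa> \<le> g r * y r"
  obtain t0 where t0: "t0 \<in> {s0<..<s1}" "\<kappa> \<le> g t0 * y t0"
    using AE_lborel_ex_in_Ioo[OF ae assms(1)] by blast
  then have "y t0 \<noteq> 0"
    using \<open>0 < \<kappa>\<close> by auto
  then obtain \<delta> where "0 < \<delta>" and sub: "{t0..t0 + \<delta>} \<subseteq> {s0<..<s1}"
    and pos: "\<And>r. r \<in> {t0..t0 + \<delta>} \<Longrightarrow> 0 < sgn (y t0) * y r"
    using continuous_on_sgn_mult_pos_right[OF y(1) t0(1)] by blast
  define \<sigma> where "\<sigma> = sgn (y t0)"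
  have ae\<sigma>: "AE r in lborel. r \<in> {t0..t0 + \<delta>} \<longrightarrow> \<kappa> \<le> \<sigma> * g r"
    using ae
  proof (rule eventually_mono, intro impI)
    fix r
    assume r: "r \<in> {t0..t0 + \<delta>}" and "r \<in> {s0<..<s1} \<longrightarrow> \<kappa> \<le> g r * y r"
    moreover have "g r * y r = (\<sigma> * g r) * (\<sigma> * y r)"
      using \<open>y t0 \<noteq> 0\<close> by (simp add: \<sigma>_def sgn_if algebra_simps)
    ultimately have le: "\<kappa> \<le> (\<sigma> * g r) * (\<sigma> * y r)"
      using sub by auto
    have le1: "\<sigma> * y r \<le> 1"
      using y(2)[of r] r sub by (auto simp: \<sigma>_def sgn_if)
    show "\<kappa> \<le> \<sigma> * g r"
      by (rule ge_if_mult_ge_pos_le_1[OF le _ le1 \<open>0 < \<kappa>\<close>]) (use pos[OF r] in \<open>simp add: \<sigma>_def\<close>)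
  qed
  have int\<sigma>: "((\<lambda>r. \<sigma> * g r) has_integral 0) {t0..t0 + \<delta>}"
  proof -
    have "s0 \<le> t0" "t0 \<le> t0 + \<delta>" "t0 + \<delta> \<le> s1"
      using subsetD[OF sub, of t0] subsetD[OF sub, of "t0 + \<delta>"] \<open>0 < \<delta>\<close> by auto
    then show ?thesis
      using has_integral_cmul[OF g[of t0 "t0 + \<delta>"], of \<sigma>] by simp
  qed
  have "\<kappa> * ((t0 + \<delta>) - t0) \<le> 0"
    by (rule has_integral_ge_if_AE_ge[OF int\<sigma> _ ae\<sigma>]) (use \<open>0 < \<delta>\<close> in simp)
  with \<open>0 < \<kappa>\<close> \<open>0 < \<delta>\<close> show False
    by (simp add: mult_le_0_iff)
qed

section \<open>The system as a rotation field\<close>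

definition weight :: "real \<Rightarrow> real \<Rightarrow> real^3" where
  "weight \<alpha> \<beta> = vector [sin \<alpha> * sin \<beta>, sin \<alpha> * cos \<beta>, cos \<alpha>]"

definition angular_velocity :: "real \<Rightarrow> real \<Rightarrow> real \<Rightarrow> real \<Rightarrow> real^3" where
  "angular_velocity \<alpha> \<beta> v1 v2 =
     vector [weight \<alpha> \<beta> $ 1 * v1, - (weight \<alpha> \<beta> $ 2 * v2), weight \<alpha> \<beta> $ 3]"

text \<open>max_ham q is the maximum of angular_velocity \<alpha> \<beta> v1 v2 \<bullet> q over |v1|, |v2| \<le> 1.\<close>
definition max_ham :: "real \<Rightarrow> real \<Rightarrow> real^3 \<Rightarrow> real" where
  "max_ham \<alpha> \<beta> q = weight \<alpha> \<beta> $ 1 * \<bar>q $ 1\<bar> + weight \<alpha> \<beta> $ 2 * \<bar>q $ 2\<bar> + weight \<alpha> \<beta> $ 3 * q $ 3"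

lemma Am_mult_vec: "Am \<alpha> \<beta> v1 v2 *v y = angular_velocity \<alpha> \<beta> v1 v2 \<times> y"
  by (simp add: Am_def Fm_def G1m_def G2m_def angular_velocity_def weight_def cross3_simps
      matrix_vector_mult_def forall_3)

lemma vec_mult_Am: "l v* Am \<alpha> \<beta> v1 v2 = - (angular_velocity \<alpha> \<beta> v1 v2 \<times> l)"
  by (simp add: Am_def Fm_def G1m_def G2m_def angular_velocity_def weight_def cross3_simps
      vector_matrix_mult_def forall_3)

lemma ham_eq: "ham \<alpha> \<beta> l y l0 v1 v2 = angular_velocity \<alpha> \<beta> v1 v2 \<bullet> (y \<times> l) + l0"
  unfolding ham_def Am_mult_vec by (metis cross_triple inner_commute)

lemma phi1_eq: "phi1 \<alpha> \<beta> lam x t = weight \<alpha> \<beta> $ 1 * (x t \<times> lam t) $ 1"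
  by (simp add: phi1_def G1m_def weight_def cross3_simps matrix_vector_mult_def)

lemma phi2_eq: "phi2 \<alpha> \<beta> lam x t = - (weight \<alpha> \<beta> $ 2 * (x t \<times> lam t) $ 2)"
  by (simp add: phi2_def G2m_def weight_def cross3_simps matrix_vector_mult_def)

lemma weight_pos:
  assumes "0 < \<alpha>" "\<alpha> < pi / 2" "0 < \<beta>" "\<beta> < pi / 2"
  shows "0 < weight \<alpha> \<beta> $ n"
proof -
  have "0 < sin \<alpha>" "0 < cos \<alpha>" "0 < sin \<beta>" "0 < cos \<beta>"
    using assms by (auto intro!: sin_gt_zero cos_gt_zero)
  then show ?thesis
    using exhaust_3[of n] by (auto simp: weight_def)
qed

lemma weight_sq_less:
  assumes "0 < \<alpha>" "\<alpha> < pi / 4"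
  shows "(weight \<alpha> \<beta> $ 1)\<^sup>2 + (weight \<alpha> \<beta> $ 2)\<^sup>2 < (weight \<alpha> \<beta> $ 3)\<^sup>2"
proof -
  have "0 < cos (2 * \<alpha>)"
    using assms by (intro cos_gt_zero) auto
  moreover have "(weight \<alpha> \<beta> $ 1)\<^sup>2 + (weight \<alpha> \<beta> $ 2)\<^sup>2 = (sin \<alpha>)\<^sup>2"
    by (simp add: weight_def power_mult_distrib flip: distrib_left)
  ultimately show ?thesis
    by (simp add: weight_def cos_double)
qed

lemma abs_weight_less_weight_3:
  assumes "0 < \<alpha>" "\<alpha> < pi / 4" "n \<noteq> 3"
  shows "\<bar>weight \<alpha> \<beta> $ n\<bar> < weight \<alpha> \<beta> $ 3"
proof -
  have "(weight \<alpha> \<beta> $ n)\<^sup>2 \<le> (weight \<alpha> \<beta> $ 1)\<^sup>2 + (weight \<alpha> \<beta> $ 2)\<^sup>2"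
    using exhaust_3[of n] assms(3) by auto
  then have sq: "\<bar>weight \<alpha> \<beta> $ n\<bar>\<^sup>2 < (weight \<alpha> \<beta> $ 3)\<^sup>2"
    using weight_sq_less[OF assms(1,2), of \<beta>] by simp
  have "0 < weight \<alpha> \<beta> $ 3"
    using assms(1,2) by (simp add: weight_def cos_gt_zero)
  then show ?thesis
    using power2_less_imp_less[OF sq] by simp
qed

lemma inner_angular_velocity_le_max_ham:
  assumes "0 \<le> weight \<alpha> \<beta> $ 1" "0 \<le> weight \<alpha> \<beta> $ 2" "\<bar>v1\<bar> \<le> 1" "\<bar>v2\<bar> \<le> 1"
  shows "angular_velocity \<alpha> \<beta> v1 v2 \<bullet> q \<le> max_ham \<alpha> \<beta> q"
proof -
  have "v1 * q $ 1 \<le> \<bar>q $ 1\<bar>" "(- v2) * q $ 2 \<le> \<bar>q $ 2\<bar>"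
    by (rule mult_le_abs_if_abs_le_1, simp add: assms)+
  then have "weight \<alpha> \<beta> $ 1 * (v1 * q $ 1) \<le> weight \<alpha> \<beta> $ 1 * \<bar>q $ 1\<bar>"
    "weight \<alpha> \<beta> $ 2 * ((- v2) * q $ 2) \<le> weight \<alpha> \<beta> $ 2 * \<bar>q $ 2\<bar>"
    using assms by (simp_all only: mult_left_mono)
  then show ?thesis
    by (simp add: angular_velocity_def max_ham_def inner_vec_def sum_3 algebra_simps)
qed

lemma max_ham_attained:
  "\<exists>v1 v2. \<bar>v1\<bar> \<le> 1 \<and> \<bar>v2\<bar> \<le> 1 \<and> angular_velocity \<alpha> \<beta> v1 v2 \<bullet> q = max_ham \<alpha> \<beta> q"
proof (intro exI conjI)
  show "angular_velocity \<alpha> \<beta> (sgn (q $ 1)) (- sgn (q $ 2)) \<bullet> q = max_ham \<alpha> \<beta> q"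
    by (simp add: angular_velocity_def max_ham_def inner_vec_def sum_3 abs_sgn)
qed (simp_all add: abs_sgn_eq)

lemma components_12_cases:
  assumes "{i, j} = {1::3, 2}"
  obtains "i = 1" "j = 2" | "i = 2" "j = 1"
  using assms by (auto simp: doubleton_eq_iff)

lemma max_ham_eq_if_component_zero:
  assumes "{i, j} = {1, 2}" "q $ i = 0"
  shows "max_ham \<alpha> \<beta> q = weight \<alpha> \<beta> $ j * \<bar>q $ j\<bar> + weight \<alpha> \<beta> $ 3 * q $ 3"
  using assms by (cases rule: components_12_cases) (auto simp: max_ham_def)

lemma norm_sq_if_component_zero:
  fixes q :: "real^3"
  assumes "{i, j} = {1, 2}" "q $ i = 0"
  shows "(norm q)\<^sup>2 = (q $ j)\<^sup>2 + (q $ 3)\<^sup>2"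
  using assms unfolding power2_norm_eq_inner
  by (cases rule: components_12_cases) (auto simp: inner_vec_def sum_3 power2_eq_square)

lemma angular_velocity_cross_component_ge:
  assumes "{i, j} = {1, 2}" "0 \<le> weight \<alpha> \<beta> $ j" "\<bar>v1\<bar> \<le> 1" "\<bar>v2\<bar> \<le> 1"
  shows "\<bar>q $ j\<bar> * (weight \<alpha> \<beta> $ 3 * \<bar>q $ j\<bar> - weight \<alpha> \<beta> $ j * \<bar>q $ 3\<bar>)
           \<le> (angular_velocity \<alpha> \<beta> v1 v2 \<times> q) $ i * (axis 3 1 \<times> q) $ i"
proof -
  define \<omega> where "\<omega> = angular_velocity \<alpha> \<beta> v1 v2"
  have prod: "(\<omega> \<times> q) $ i * (axis 3 1 \<times> q) $ i = \<omega> $ 3 * (q $ j)\<^sup>2 - \<omega> $ j * q $ j * q $ 3"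
    using assms(1) by (cases rule: components_12_cases)
      (auto simp: cross_components axis_def power2_eq_square algebra_simps)
  have "\<bar>\<omega> $ j\<bar> \<le> weight \<alpha> \<beta> $ j"
    using assms by (cases rule: components_12_cases)
      (auto simp: \<omega>_def angular_velocity_def abs_mult intro: mult_left_le)
  then have "\<bar>\<omega> $ j\<bar> * (\<bar>q $ j\<bar> * \<bar>q $ 3\<bar>) \<le> weight \<alpha> \<beta> $ j * (\<bar>q $ j\<bar> * \<bar>q $ 3\<bar>)"
    by (rule mult_right_mono) simp
  then have "\<omega> $ j * q $ j * q $ 3 \<le> weight \<alpha> \<beta> $ j * \<bar>q $ j\<bar> * \<bar>q $ 3\<bar>"
    using abs_ge_self[of "\<omega> $ j * q $ j * q $ 3"] by (simp add: abs_mult mult.assoc)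
  moreover have "\<omega> $ 3 = weight \<alpha> \<beta> $ 3"
    by (simp add: \<omega>_def angular_velocity_def)
  ultimately show ?thesis
    unfolding \<omega>_def[symmetric] prod by (simp add: power2_eq_square abs_mult_self_eq algebra_simps)
qed

locale extremal_pair =
  fixes \<alpha> \<beta> T :: real and x :: "real \<Rightarrow> real^3" and u1 u2 :: "real \<Rightarrow> real"
    and lam :: "real \<Rightarrow> real^3" and l0 :: real
  assumes extremal: "extremal \<alpha> \<beta> T x u1 u2 lam l0"
begin

definition \<omega> :: "real \<Rightarrow> real^3" where
  "\<omega> t = angular_velocity \<alpha> \<beta> (u1 t) (u2 t)"

definition \<Phi> :: "real \<Rightarrow> real^3" where
  "\<Phi> t = x t \<times> lam t"

lemma T_pos: "0 < T"
  using extremal unfolding extremal_def by blast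

lemma controls_bounded: "t \<in> {0..T} \<Longrightarrow> \<bar>u1 t\<bar> \<le> 1 \<and> \<bar>u2 t\<bar> \<le> 1"
  using extremal unfolding extremal_def by blast

lemma norm_x: "t \<in> {0..T} \<Longrightarrow> norm (x t) = 1"
  using extremal unfolding extremal_def by blast

lemma lam_orthogonal: "t \<in> {0..T} \<Longrightarrow> lam t \<bullet> x t = 0"
  using extremal unfolding extremal_def by blast

lemma lam_nonzero: "t \<in> {0..T} \<Longrightarrow> lam t \<noteq> 0"
  using extremal unfolding extremal_def by blast

lemma lipschitz_lam: obtains L where "L-lipschitz_on {0..T} lam"
  using extremal unfolding extremal_def by blast

lemma x_increment:
  assumes "0 \<le> s" "s \<le> t" "t \<le> T"
  shows "((\<lambda>r. \<omega> r \<times> x r) has_integral (x t - x s)) {s..t}"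
proof (rule has_integral_increment[where a = 0 and b = T])
  show "((\<lambda>r. \<omega> r \<times> x r) has_integral (x t - x 0)) {0..t}" if "t \<in> {0..T}" for t
    using extremal that unfolding extremal_def \<omega>_def Am_mult_vec by blast
qed (use assms in auto)

lemma continuous_on_x: "continuous_on {0..T} x"
proof -
  have "(\<lambda>r. \<omega> r \<times> x r) integrable_on {0..T}"
    using x_increment[of 0 T] T_pos by auto
  then have "continuous_on {0..T} (\<lambda>t. x 0 + integral {0..t} (\<lambda>r. \<omega> r \<times> x r))"
    by (intro continuous_intros indefinite_integral_continuous_1)
  moreover have "x 0 + integral {0..t} (\<lambda>r. \<omega> r \<times> x r) = x t" if "t \<in> {0..T}" for t
    using x_increment[of 0 t] that by (simp add: integral_unique)
  ultimately show ?thesis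
    by (rule continuous_on_eq)
qed

lemma continuous_on_lam: "continuous_on {0..T} lam"
  using lipschitz_lam lipschitz_on_continuous_on by blast

lemma continuous_on_\<Phi>: "continuous_on {0..T} \<Phi>"
  unfolding \<Phi>_def by (intro continuous_on_cross continuous_on_x continuous_on_lam)

lemma lam_derivative:
  "AE t in lborel. t \<in> {0..T} \<longrightarrow> (lam has_vector_derivative \<omega> t \<times> lam t) (at t within {0..T})"
  using extremal unfolding extremal_def \<omega>_def vec_mult_Am minus_minus by blast

lemma maximum_condition:
  "AE t in lborel. t \<in> {0..T} \<longrightarrow> \<omega> t \<bullet> \<Phi> t = - l0 \<and>
     (\<forall>v1 v2. \<bar>v1\<bar> \<le> 1 \<longrightarrow> \<bar>v2\<bar> \<le> 1 \<longrightarrow> angular_velocity \<alpha> \<beta> v1 v2 \<bullet> \<Phi> t \<le> - l0)"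
proof -
  have "AE t in lborel. t \<in> {0..T} \<longrightarrow> ham \<alpha> \<beta> (lam t) (x t) l0 (u1 t) (u2 t) = 0 \<and>
     (\<forall>v1 v2. \<bar>v1\<bar> \<le> 1 \<longrightarrow> \<bar>v2\<bar> \<le> 1 \<longrightarrow>
        ham \<alpha> \<beta> (lam t) (x t) l0 v1 v2 \<le> ham \<alpha> \<beta> (lam t) (x t) l0 (u1 t) (u2 t))"
    using extremal unfolding extremal_def by blast
  then show ?thesis
    by (rule eventually_mono) (auto simp: ham_eq \<omega>_def \<Phi>_def add_eq_0_iff2)
qed

lemma norm_lam:
  assumes "t \<in> {0..T}"
  shows "norm (lam t) = norm (lam 0)"
proof -
  obtain L where "L-lipschitz_on {0..T} lam"
    using lipschitz_lam .
  moreover have "AE t in lborel. t \<in> {0..T} \<longrightarrow>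
      (lam has_vector_derivative \<omega> t \<times> lam t) (at t within {0..T}) \<and> lam t \<bullet> (\<omega> t \<times> lam t) = 0"
    using lam_derivative by (rule eventually_mono) (simp add: dot_cross_self)
  ultimately show ?thesis
    using assms by (rule norm_eq_if_AE_derivative_orthogonal)
qed

lemma norm_\<Phi>:
  assumes "t \<in> {0..T}"
  shows "norm (\<Phi> t) = norm (lam 0)"
proof -
  have "(norm (\<Phi> t))\<^sup>2 = (norm (lam t))\<^sup>2"
    using norm_cross[of "x t" "lam t"] norm_x[OF assms] lam_orthogonal[OF assms]
    by (simp add: \<Phi>_def inner_commute)
  then show ?thesis
    using norm_lam[OF assms] by (simp add: power2_eq_iff_nonneg)
qed

end

section \<open>Singular arcs of normal extremals\<close>

locale normal_extremal = extremal_pair +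
  assumes normal: "l0 < 0"
    and \<alpha>_range: "0 < \<alpha>" "\<alpha> < pi / 4"
    and \<beta>_range: "0 < \<beta>" "\<beta> < pi / 2"
begin

lemma weight_positive: "0 < weight \<alpha> \<beta> $ n"
  using \<alpha>_range \<beta>_range by (intro weight_pos) auto

lemma max_ham_\<Phi>:
  assumes "t \<in> {0..T}"
  shows "max_ham \<alpha> \<beta> (\<Phi> t) = - l0"
proof -
  have "AE t in lborel. t \<in> {0..T} \<longrightarrow> max_ham \<alpha> \<beta> (\<Phi> t) + l0 = 0"
    using maximum_condition
  proof (rule eventually_mono, intro impI)
    fix t
    assume t: "t \<in> {0..T}" and "t \<in> {0..T} \<longrightarrow> \<omega> t \<bullet> \<Phi> t = - l0 \<and>
      (\<forall>v1 v2. \<bar>v1\<bar> \<le> 1 \<longrightarrow> \<bar>v2\<bar> \<le> 1 \<longrightarrow> angular_velocity \<alpha> \<beta> v1 v2 \<bullet> \<Phi> t \<le> - l0)"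
    then have opt: "\<omega> t \<bullet> \<Phi> t = - l0"
      and le: "\<And>v1 v2. \<bar>v1\<bar> \<le> 1 \<Longrightarrow> \<bar>v2\<bar> \<le> 1 \<Longrightarrow> angular_velocity \<alpha> \<beta> v1 v2 \<bullet> \<Phi> t \<le> - l0"
      by auto
    have "max_ham \<alpha> \<beta> (\<Phi> t) \<le> - l0"
      using max_ham_attained[of \<alpha> \<beta> "\<Phi> t"] le by force
    moreover have "\<omega> t \<bullet> \<Phi> t \<le> max_ham \<alpha> \<beta> (\<Phi> t)"
      unfolding \<omega>_def using controls_bounded[OF t] weight_positive
      by (intro inner_angular_velocity_le_max_ham) (auto intro: less_imp_le)
    ultimately show "max_ham \<alpha> \<beta> (\<Phi> t) + l0 = 0"
      using opt by linarith
  qed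
  moreover have "continuous_on {0..T} (\<lambda>t. max_ham \<alpha> \<beta> (\<Phi> t) + l0)"
    unfolding max_ham_def by (intro continuous_intros continuous_on_\<Phi>)
  ultimately have "max_ham \<alpha> \<beta> (\<Phi> t) + l0 = 0"
    using T_pos assms by (intro continuous_on_eq_0_if_AE[where g = "\<lambda>t. max_ham \<alpha> \<beta> (\<Phi> t) + l0"])
  then show ?thesis
    by simp
qed

text \<open>At the north pole the drift term c \<Phi>3 of the Hamiltonian vanishes.\<close>
lemma ham_level_lt_at_north:
  assumes "x 0 = north"
  shows "l0\<^sup>2 < (weight \<alpha> \<beta> $ 3)\<^sup>2 * (norm (\<Phi> 0))\<^sup>2"
proof -
  let ?w = "weight \<alpha> \<beta>"
  have "0 \<in> {0..T}"
    using T_pos by simp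
  have "\<Phi> 0 $ 3 = 0"
    using assms by (simp add: \<Phi>_def north_def cross_components)
  then have "(- l0)\<^sup>2 = (?w $ 1 * \<bar>\<Phi> 0 $ 1\<bar> + ?w $ 2 * \<bar>\<Phi> 0 $ 2\<bar>)\<^sup>2"
    using max_ham_\<Phi>[OF \<open>0 \<in> {0..T}\<close>] by (simp add: max_ham_def)
  also have "\<dots> \<le> ((?w $ 1)\<^sup>2 + (?w $ 2)\<^sup>2) * ((\<Phi> 0 $ 1)\<^sup>2 + (\<Phi> 0 $ 2)\<^sup>2)"
    by (rule weighted_abs_sum_sq_le)
  also have "(\<Phi> 0 $ 1)\<^sup>2 + (\<Phi> 0 $ 2)\<^sup>2 = (norm (\<Phi> 0))\<^sup>2"
    using \<open>\<Phi> 0 $ 3 = 0\<close> unfolding power2_norm_eq_inner by (simp add: inner_vec_def sum_3 power2_eq_square)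
  also have "((?w $ 1)\<^sup>2 + (?w $ 2)\<^sup>2) * (norm (\<Phi> 0))\<^sup>2 < (?w $ 3)\<^sup>2 * (norm (\<Phi> 0))\<^sup>2"
    using weight_sq_less[OF \<alpha>_range] lam_nonzero[OF \<open>0 \<in> {0..T}\<close>] norm_\<Phi>[OF \<open>0 \<in> {0..T}\<close>]
    by (intro mult_strict_right_mono) auto
  finally show ?thesis
    by simp
qed

lemma \<Phi>_at_singular_point:
  assumes ij: "{i, j} = {1, 2}" and "t \<in> {0..T}" "\<Phi> t $ i = 0"
  shows "weight \<alpha> \<beta> $ 3 * \<Phi> t $ 3 + weight \<alpha> \<beta> $ j * \<bar>\<Phi> t $ j\<bar> = - l0"
    and "(\<Phi> t $ j)\<^sup>2 + (\<Phi> t $ 3)\<^sup>2 = (norm (\<Phi> 0))\<^sup>2"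
proof -
  show "weight \<alpha> \<beta> $ 3 * \<Phi> t $ 3 + weight \<alpha> \<beta> $ j * \<bar>\<Phi> t $ j\<bar> = - l0"
    using max_ham_\<Phi>[OF assms(2)] max_ham_eq_if_component_zero[OF ij assms(3)] by simp
  have "0 \<in> {0..T}"
    using T_pos by simp
  then show "(\<Phi> t $ j)\<^sup>2 + (\<Phi> t $ 3)\<^sup>2 = (norm (\<Phi> 0))\<^sup>2"
    using norm_\<Phi> assms(2) norm_sq_if_component_zero[OF ij assms(3)] by simp
qed

lemma singular_point_inequality:
  assumes "x 0 = north" and ij: "{i, j} = {1, 2}" and "t \<in> {0..T}" "\<Phi> t $ i = 0"
  shows "weight \<alpha> \<beta> $ j * \<bar>\<Phi> t $ 3\<bar> < weight \<alpha> \<beta> $ 3 * \<bar>\<Phi> t $ j\<bar>"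
proof (rule singular_arc_inequality)
  show "0 \<le> weight \<alpha> \<beta> $ j" "0 < - l0"
    using weight_positive normal by (auto intro: less_imp_le)
  have "\<bar>weight \<alpha> \<beta> $ j\<bar> < weight \<alpha> \<beta> $ 3"
    using abs_weight_less_weight_3[OF \<alpha>_range, of j \<beta>] ij by (auto simp: doubleton_eq_iff)
  then show "weight \<alpha> \<beta> $ j \<le> weight \<alpha> \<beta> $ 3"
    by (simp add: abs_less_iff)
  show "weight \<alpha> \<beta> $ 3 * \<Phi> t $ 3 + weight \<alpha> \<beta> $ j * \<bar>\<Phi> t $ j\<bar> = - l0"
    by (rule \<Phi>_at_singular_point(1)[OF ij assms(3,4)])
  show "(- l0)\<^sup>2 < (weight \<alpha> \<beta> $ 3)\<^sup>2 * ((\<Phi> t $ j)\<^sup>2 + (\<Phi> t $ 3)\<^sup>2)"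
    using ham_level_lt_at_north[OF assms(1)] \<Phi>_at_singular_point(2)[OF ij assms(3,4)] by simp
qed

text \<open>On a singular arc |\<Phi>_j| is a root of a fixed quadratic, as (|\<Phi>_j|, \<Phi>_3) lies both on
  a line and on a circle.\<close>
lemma \<Phi>_component_constant_on_arc:
  assumes ij: "{i, j} = {1, 2}" and J: "0 \<le> s0" "s0 \<le> s1" "s1 \<le> T"
    and sing: "\<forall>t\<in>{s0..s1}. \<Phi> t $ i = 0"
  shows "\<forall>t\<in>{s0..s1}. \<Phi> t $ j = \<Phi> s0 $ j"
proof -
  define k where "k = weight \<alpha> \<beta> $ j"
  define c where "c = weight \<alpha> \<beta> $ 3"
  define h where "h = - l0"
  define \<mu> where "\<mu> = (norm (\<Phi> 0))\<^sup>2"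
  define Z where "Z = {z. (k\<^sup>2 + c\<^sup>2) * z\<^sup>2 + (- 2 * h * k) * z + (h\<^sup>2 - c\<^sup>2 * \<mu>) = 0}"
  have "finite Z"
    unfolding Z_def using weight_positive[of 3]
    by (intro finite_quadratic_roots) (simp add: c_def add_nonneg_pos)
  have "\<bar>\<Phi> t $ j\<bar> \<in> Z" if "t \<in> {s0..s1}" for t
  proof -
    have ham: "c * \<Phi> t $ 3 + k * \<bar>\<Phi> t $ j\<bar> = h" and sph: "(\<Phi> t $ j)\<^sup>2 + (\<Phi> t $ 3)\<^sup>2 = \<mu>"
      using \<Phi>_at_singular_point[OF ij, of t] that J sing by (auto simp: k_def c_def h_def \<mu>_def)
    have "c\<^sup>2 * \<mu> = c\<^sup>2 * \<bar>\<Phi> t $ j\<bar>\<^sup>2 + (c * \<Phi> t $ 3)\<^sup>2"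
      by (simp add: power_mult_distrib algebra_simps flip: sph)
    also have "c * \<Phi> t $ 3 = h - k * \<bar>\<Phi> t $ j\<bar>"
      using ham by simp
    finally show ?thesis
      unfolding Z_def by (simp add: power2_eq_square algebra_simps)
  qed
  then have "(\<lambda>t. \<Phi> t $ j) ` {s0..s1} \<subseteq> Z \<union> uminus ` Z"
    by (force simp: abs_if)
  then have "(\<lambda>t. \<Phi> t $ j) constant_on {s0..s1}"
    using \<open>finite Z\<close> J continuous_on_subset[OF continuous_on_\<Phi>]
    by (intro continuous_finite_range_constant continuous_intros) (auto intro: finite_subset)
  then show ?thesis
    using J by (auto simp: constant_on_def)
qed

lemma \<Phi>_constant_on_arc:
  assumes ij: "{i, j} = {1, 2}" and J: "0 \<le> s0" "s0 \<le> s1" "s1 \<le> T"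
    and sing: "\<forall>t\<in>{s0..s1}. \<Phi> t $ i = 0"
  shows "\<forall>t\<in>{s0..s1}. \<Phi> t = \<Phi> s0"
proof (intro ballI iffD2[OF vec_eq_iff] allI)
  fix t n
  assume t: "t \<in> {s0..s1}"
  have "s0 \<in> {s0..s1}" "t \<in> {0..T}" "s0 \<in> {0..T}"
    using t J by auto
  have eq_j: "\<Phi> t $ j = \<Phi> s0 $ j"
    using \<Phi>_component_constant_on_arc[OF assms] t by blast
  have "weight \<alpha> \<beta> $ 3 * \<Phi> t $ 3 = weight \<alpha> \<beta> $ 3 * \<Phi> s0 $ 3"
    using \<Phi>_at_singular_point(1)[OF ij \<open>t \<in> {0..T}\<close>] \<Phi>_at_singular_point(1)[OF ij \<open>s0 \<in> {0..T}\<close>]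
      sing t \<open>s0 \<in> {s0..s1}\<close> eq_j by (metis add_right_cancel)
  then have eq_3: "\<Phi> t $ 3 = \<Phi> s0 $ 3"
    using weight_positive[of 3] by simp
  have "n = i \<or> n = j \<or> n = 3"
    using ij by (cases rule: components_12_cases) (use exhaust_3[of n] in auto)
  then show "\<Phi> t $ n = \<Phi> s0 $ n"
    using sing t \<open>s0 \<in> {s0..s1}\<close> eq_j eq_3 by auto
qed

text \<open>Differentiating \<Phi> \<bullet> lam = 0 along an arc where \<Phi> = Q is constant, and using
  (x \<times> lam) \<bullet> (\<omega> \<times> lam) = |lam|^2 (\<omega> \<bullet> x), shows that \<omega> is tangent to the sphere at x.\<close>
lemma angular_velocity_orthogonal_on_arc:
  assumes J: "0 \<le> s0" "s1 \<le> T" and Q: "\<forall>t\<in>{s0..s1}. \<Phi> t = Q"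
  shows "AE t in lborel. t \<in> {s0<..<s1} \<longrightarrow> \<omega> t \<bullet> x t = 0"
  using lam_derivative
proof (rule eventually_mono, intro impI)
  fix t
  assume t: "t \<in> {s0<..<s1}"
    and "t \<in> {0..T} \<longrightarrow> (lam has_vector_derivative \<omega> t \<times> lam t) (at t within {0..T})"
  moreover have "at t within {0..T} = at t"
    using t J by (intro at_within_interior) auto
  ultimately have "(lam has_vector_derivative \<omega> t \<times> lam t) (at t)"
    using J by auto
  then have deriv: "((\<lambda>s. Q \<bullet> lam s) has_real_derivative Q \<bullet> (\<omega> t \<times> lam t)) (at t)"
    by (rule has_real_derivative_inner_const)
  have zero: "Q \<bullet> lam r = 0" if "r \<in> {s0..s1}" for r
    using Q that dot_cross_self(3)[of "x r" "lam r"] by (simp add: \<Phi>_def)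
  have "Q \<bullet> (\<omega> t \<times> lam t) = 0"
    by (rule DERIV_local_const[OF deriv, of "min (t - s0) (s1 - t)"])
      (use t zero in \<open>auto simp: abs_less_iff\<close>)
  moreover have "Q \<bullet> (\<omega> t \<times> lam t) = (x t \<bullet> \<omega> t) * (lam t \<bullet> lam t)"
  proof -
    have "Q = x t \<times> lam t" "x t \<bullet> lam t = 0"
      using Q t J lam_orthogonal[of t] by (auto simp: \<Phi>_def inner_commute)
    then show ?thesis
      using dot_cross[of "x t" "lam t" "\<omega> t" "lam t"] by simp
  qed
  moreover have "lam t \<bullet> lam t \<noteq> 0"
    using lam_nonzero[of t] t J by simp
  ultimately show "\<omega> t \<bullet> x t = 0"
    by (simp add: inner_commute)
qed

text \<open>The same computation with x in place of lam, which is only known in integrated form: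
  (x \<times> lam) \<bullet> (\<omega> \<times> x) = - (\<omega> \<bullet> lam).\<close>
lemma integral_angular_velocity_lam_on_arc:
  assumes J: "0 \<le> s0" "s1 \<le> T" and Q: "\<forall>t\<in>{s0..s1}. \<Phi> t = Q"
    and st: "s0 \<le> s" "s \<le> t" "t \<le> s1"
  shows "((\<lambda>r. \<omega> r \<bullet> lam r) has_integral 0) {s..t}"
proof -
  have int: "((\<lambda>r. Q \<bullet> (\<omega> r \<times> x r)) has_integral Q \<bullet> (x t - x s)) {s..t}"
    using has_integral_linear[OF x_increment bounded_linear_inner_right, of s t Q] J st
    by (simp add: o_def)
  have "Q \<bullet> x r = 0" if "r \<in> {s0..s1}" for r
    using Q that dot_cross_self(1)[of "x r" "lam r"] by (simp add: \<Phi>_def inner_commute)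
  then have diff: "Q \<bullet> (x t - x s) = 0"
    using st by (simp add: inner_diff_right)
  have pointwise: "Q \<bullet> (\<omega> r \<times> x r) = - (\<omega> r \<bullet> lam r)" if "r \<in> {s..t}" for r
  proof -
    have r: "r \<in> {0..T}" "Q = x r \<times> lam r"
      using that J st Q by (auto simp: \<Phi>_def)
    then have "x r \<bullet> x r = 1" "lam r \<bullet> x r = 0"
      using norm_x[OF r(1)] lam_orthogonal[OF r(1)] by (simp_all add: norm_eq_1)
    then show ?thesis
      using dot_cross[of "x r" "lam r" "\<omega> r" "x r"] r(2) by (simp add: inner_commute)
  qed
  have "((\<lambda>r. - (\<omega> r \<bullet> lam r)) has_integral 0) {s..t}"
    using has_integral_eq[OF pointwise int] diff by simp
  from has_integral_neg[OF this] show ?thesis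
    by simp
qed

text \<open>By Lagrange's identity \<omega> \<times> (x \<times> lam) = (\<omega> \<bullet> lam) x - (\<omega> \<bullet> x) lam, so on the arc
  the i-th component of \<omega> \<times> Q, which has a fixed sign, equals (\<omega> \<bullet> lam) x_i.\<close>
lemma cross_component_lower_bound_on_arc:
  assumes ij: "{i, j} = {1, 2}" and J: "0 \<le> s0" "s1 \<le> T" and Q: "\<forall>t\<in>{s0..s1}. \<Phi> t = Q"
  shows "AE r in lborel. r \<in> {s0<..<s1} \<longrightarrow>
    \<bar>Q $ j\<bar> * (weight \<alpha> \<beta> $ 3 * \<bar>Q $ j\<bar> - weight \<alpha> \<beta> $ j * \<bar>Q $ 3\<bar>)
      \<le> ((axis 3 1 \<times> Q) $ i * (\<omega> r \<bullet> lam r)) * x r $ i"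
  using angular_velocity_orthogonal_on_arc[OF J Q]
proof (rule eventually_mono, intro impI)
  fix r
  assume "r \<in> {s0<..<s1}" and "r \<in> {s0<..<s1} \<longrightarrow> \<omega> r \<bullet> x r = 0"
  then have r: "\<omega> r \<bullet> x r = 0" "r \<in> {0..T}" "Q = x r \<times> lam r"
    using J Q by (auto simp: \<Phi>_def)
  then have "\<omega> r \<times> Q = (\<omega> r \<bullet> lam r) *\<^sub>R x r"
    by (simp add: Lagrange)
  moreover have "\<bar>Q $ j\<bar> * (weight \<alpha> \<beta> $ 3 * \<bar>Q $ j\<bar> - weight \<alpha> \<beta> $ j * \<bar>Q $ 3\<bar>)
      \<le> (\<omega> r \<times> Q) $ i * (axis 3 1 \<times> Q) $ i"
    unfolding \<omega>_def using ij controls_bounded[OF r(2)] weight_positive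
    by (intro angular_velocity_cross_component_ge) (auto intro: less_imp_le)
  ultimately show "\<bar>Q $ j\<bar> * (weight \<alpha> \<beta> $ 3 * \<bar>Q $ j\<bar> - weight \<alpha> \<beta> $ j * \<bar>Q $ 3\<bar>)
      \<le> ((axis 3 1 \<times> Q) $ i * (\<omega> r \<bullet> lam r)) * x r $ i"
    by (simp add: algebra_simps)
qed

theorem no_singular_arc:
  assumes north: "x 0 = north" and ij: "{i, j} = {1, 2}"
    and J: "0 \<le> s0" "s0 < s1" "s1 \<le> T" and sing: "\<forall>t\<in>{s0..s1}. \<Phi> t $ i = 0"
  shows False
proof -
  define Q where "Q = \<Phi> s0"
  have Q: "\<forall>t\<in>{s0..s1}. \<Phi> t = Q"
    unfolding Q_def using J by (intro \<Phi>_constant_on_arc[OF ij _ _ _ sing]) auto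
  have "weight \<alpha> \<beta> $ j * \<bar>Q $ 3\<bar> < weight \<alpha> \<beta> $ 3 * \<bar>Q $ j\<bar>"
    unfolding Q_def using J sing by (intro singular_point_inequality[OF north ij]) auto
  moreover have "0 \<le> weight \<alpha> \<beta> $ j * \<bar>Q $ 3\<bar>"
    using weight_positive[of j] by simp
  ultimately have \<kappa>: "0 < \<bar>Q $ j\<bar> * (weight \<alpha> \<beta> $ 3 * \<bar>Q $ j\<bar> - weight \<alpha> \<beta> $ j * \<bar>Q $ 3\<bar>)"
    using weight_positive[of 3] by (intro mult_pos_pos) (auto simp: zero_less_mult_iff)
  show False
  proof (rule notE[OF not_AE_mult_ge_if_integrals_vanish[OF \<open>s0 < s1\<close> \<kappa>]])
    show "continuous_on {s0..s1} (\<lambda>r. x r $ i)"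
      using J by (intro continuous_intros continuous_on_subset[OF continuous_on_x]) auto
    show "\<bar>x r $ i\<bar> \<le> 1" if "r \<in> {s0..s1}" for r
      using component_le_norm_cart[of "x r" i] norm_x[of r] that J by simp
    show "((\<lambda>r. (axis 3 1 \<times> Q) $ i * (\<omega> r \<bullet> lam r)) has_integral 0) {s..t}"
      if "s0 \<le> s" "s \<le> t" "t \<le> s1" for s t
      using has_integral_mult_right[OF integral_angular_velocity_lam_on_arc[OF _ _ Q that]] J
      by simp
    show "AE r in lborel. r \<in> {s0<..<s1} \<longrightarrow>
        \<bar>Q $ j\<bar> * (weight \<alpha> \<beta> $ 3 * \<bar>Q $ j\<bar> - weight \<alpha> \<beta> $ j * \<bar>Q $ 3\<bar>)
          \<le> ((axis 3 1 \<times> Q) $ i * (\<omega> r \<bullet> lam r)) * x r $ i"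
      by (rule cross_component_lower_bound_on_arc[OF ij J(1) J(3) Q])
  qed
qed

end

theorem corollary4:
  fixes \<alpha> \<beta> :: real
  assumes "0 < \<alpha>" and "\<alpha> < pi / 4" and "0 < \<beta>" and "\<beta> \<le> pi / 4"
  shows "\<not> (\<exists>T x u1 u2 lam l0 tc \<epsilon>.
             extremal \<alpha> \<beta> T x u1 u2 lam l0 \<and> l0 < 0 \<and> x 0 = north \<and>
             0 < tc \<and> 0 < \<epsilon> \<and> tc + \<epsilon> \<le> T \<and>
             bang_bang u1 u2 0 tc \<and>
             ((\<forall>t\<in>{tc..tc + \<epsilon>}. phi1 \<alpha> \<beta> lam x t = 0) \<or>
              (\<forall>t\<in>{tc..tc + \<epsilon>}. phi2 \<alpha> \<beta> lam x t = 0)))"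
proof (rule notI, elim exE conjE)
  fix T x u1 u2 lam l0 tc \<epsilon>
  assume ext: "extremal \<alpha> \<beta> T x u1 u2 lam l0" and "l0 < 0" and north: "x 0 = north"
    and "0 < tc" "0 < \<epsilon>" and "tc + \<epsilon> \<le> T"
    and "bang_bang u1 u2 0 tc" \<comment> \<open>not needed: no singular arc starts at any time\<close>
    and sing: "(\<forall>t\<in>{tc..tc + \<epsilon>}. phi1 \<alpha> \<beta> lam x t = 0) \<or> (\<forall>t\<in>{tc..tc + \<epsilon>}. phi2 \<alpha> \<beta> lam x t = 0)"
  interpret normal_extremal \<alpha> \<beta> T x u1 u2 lam l0
    using ext \<open>l0 < 0\<close> assms by unfold_locales auto
  have arc: "0 \<le> tc" "tc < tc + \<epsilon>" "tc + \<epsilon> \<le> T"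
    using \<open>0 < tc\<close> \<open>0 < \<epsilon>\<close> \<open>tc + \<epsilon> \<le> T\<close> by auto
  from sing show False
  proof
    assume "\<forall>t\<in>{tc..tc + \<epsilon>}. phi1 \<alpha> \<beta> lam x t = 0"
    then have "\<forall>t\<in>{tc..tc + \<epsilon>}. \<Phi> t $ 1 = 0"
      using weight_positive[of 1] by (simp add: phi1_eq \<Phi>_def)
    with no_singular_arc[where i = 1 and j = 2, OF north _ arc] show False
      by simp
  next
    assume "\<forall>t\<in>{tc..tc + \<epsilon>}. phi2 \<alpha> \<beta> lam x t = 0"
    then have "\<forall>t\<in>{tc..tc + \<epsilon>}. \<Phi> t $ 2 = 0"
      using weight_positive[of 2] by (simp add: phi2_eq \<Phi>_def)
    with no_singular_arc[where i = 2 and j = 1, OF north _ arc] show False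
      by (simp add: insert_commute)
  qed
qed

end
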